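(* Let $(X,f)$ be a dynamical system. Suppose there are $\varepsilon>0$ and a dense Mycielski set $S\subset X$ such that (i) $S\times S\subset\mathrm{SProx}(f)$, and (ii) for every nonempty open $W\subset X$ there is a Cantor set $C\subset S\cap W$ which is syndetically $3\varepsilon$-scrambled for $f$. Then $f$ has a dense Mycielski syndetically $\varepsilon$-scrambled set $T$ with $T\subset S$.
   Context: Dynamical system: compact metric space $X$ with metric $d$ and continuous $f$. Syndetic: subset of $\mathbb N$ meeting every set with arbitrarily long runs of consecutive integers. $\mathrm{Asy}(f)=\{(x,y):d(f^nx,f^ny)\to0\}$, $\mathrm{SProx}(f)=\{(x,y):\{n:d(f^nx,f^ny)<\eta\}$ syndetic for all $\eta>0\}$. A set with at least two points is syndetically $\delta$-scrambled if every pair of distinct points $x,y$ in it lies in $\mathrm{SProx}(f)\setminus\mathrm{Asy}(f)$ and satisfies $\limsup_n d(f^nx,f^ny)\ge\delta$. Cantor set: nonempty compact perfect totally disconnected; Mycielski set: countable union of Cantor sets. *)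

theory Defs
  imports "HOL-Analysis.Analysis" "HOL-Library.Liminf_Limsup"
begin

definition thick :: "nat set \<Rightarrow> bool" where
  "thick B \<longleftrightarrow> (\<forall>L. \<exists>m. {m..<m+L} \<subseteq> B)"

definition syndetic :: "nat set \<Rightarrow> bool" where
  "syndetic A \<longleftrightarrow> (\<forall>B. thick B \<longrightarrow> A \<inter> B \<noteq> {})"

definition Asy :: "('a::metric_space \<Rightarrow> 'a) \<Rightarrow> ('a \<times> 'a) set" where
  "Asy f = {(x, y). (\<lambda>n. dist ((f ^^ n) x) ((f ^^ n) y)) \<longlonglongrightarrow> 0}"

definition SProx :: "('a::metric_space \<Rightarrow> 'a) \<Rightarrow> ('a \<times> 'a) set" where
  "SProx f = {(x, y). \<forall>\<eta>>0. syndetic {n. dist ((f ^^ n) x) ((f ^^ n) y) < \<eta>}}"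

definition syndetically_scrambled ::
    "('a::metric_space \<Rightarrow> 'a) \<Rightarrow> real \<Rightarrow> 'a set \<Rightarrow> bool" where
  "syndetically_scrambled f \<delta> A \<longleftrightarrow>
     (\<exists>x\<in>A. \<exists>y\<in>A. x \<noteq> y) \<and>
     (\<forall>x\<in>A. \<forall>y\<in>A. x \<noteq> y \<longrightarrow>
        (x, y) \<in> SProx f - Asy f \<and>
        ereal \<delta> \<le> limsup (\<lambda>n. ereal (dist ((f ^^ n) x) ((f ^^ n) y))))"

definition totally_disconnected :: "'a::topological_space set \<Rightarrow> bool" where
  "totally_disconnected C \<longleftrightarrow> (\<forall>T. T \<subseteq> C \<and> connected T \<longrightarrow> (\<exists>a. T \<subseteq> {a}))"

definition cantor_set :: "'a::metric_space set \<Rightarrow> bool" where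
  "cantor_set C \<longleftrightarrow> C \<noteq> {} \<and> compact C \<and> (\<forall>x\<in>C. x islimpt C) \<and> totally_disconnected C"

text \<open>Countable union of Cantor sets (indexed by nat; repetitions allow finite families).\<close>
definition mycielski :: "'a::metric_space set \<Rightarrow> bool" where
  "mycielski M \<longleftrightarrow> (\<exists>Cs :: nat \<Rightarrow> 'a set. (\<forall>n. cantor_set (Cs n)) \<and> M = (\<Union>n. Cs n))"

end

theory Submission
  imports Defs
begin

text \<open>
  Using compactness, X has countably many nonempty relatively open test sets W n
  such that any set meeting all of them is dense. Hypothesis (ii) provides Cantor sets
  C n \<subseteq> S \<inter> W n which are syndetically 3 eps-scrambled. Two points of one C n already behave
  as required, so the task is to thin each C n to a Cantor subset (its core) such that points from
  different cores are eps-apart at arbitrarily late times; the union T of the cores is then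
  dense, a Mycielski set, and syndetically eps-scrambled (proximality comes from S \<times> S \<subseteq> SProx f).

  The cores are built by a Cantor scheme running on all C n simultaneously. The driving fact is
  that in a 3 eps-scrambled set no orbit eps-shadows two distinct points, so next to every point
  of C n there are points frequently eps-separated from any given orbit; by continuity of the
  iterates such separation persists on small balls. At stage m every existing node is split into
  two disjoint small balls, a new tree for C m is started, and finitely many shrinkings separate
  all pairs of nodes of different trees after time m.
\<close>

text \<open>Two orbits are separated after time k if at some time n >= k their distance exceeds eps.
  Being separated after every time is the quantitative opposite of asymptoticity.\<close>

definition separated_after :: "('a::metric_space \<Rightarrow> 'a) \<Rightarrow> real \<Rightarrow> nat \<Rightarrow> 'a \<Rightarrow> 'a \<Rightarrow> bool" where
  "separated_after f \<epsilon> k x y \<longleftrightarrow> (\<exists>n\<ge>k. \<epsilon> < dist ((f ^^ n) x) ((f ^^ n) y))"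

lemma separated_after_mono:
  "separated_after f \<epsilon> m x y \<Longrightarrow> k \<le> m \<Longrightarrow> separated_after f \<epsilon> k x y"
  unfolding separated_after_def by (meson order_trans)

lemma frequently_separated_not_eventually_close:
  assumes "\<And>k. separated_after f \<epsilon> k x y"
  shows "\<not> eventually (\<lambda>n. dist ((f ^^ n) x) ((f ^^ n) y) < \<epsilon>) sequentially"
proof
  assume "eventually (\<lambda>n. dist ((f ^^ n) x) ((f ^^ n) y) < \<epsilon>) sequentially"
  then obtain N where "\<And>n. n \<ge> N \<Longrightarrow> dist ((f ^^ n) x) ((f ^^ n) y) < \<epsilon>"
    by (auto simp: eventually_sequentially)
  with assms[of N] show False
    unfolding separated_after_def by force
qed

lemma frequently_separated_not_Asy:
  assumes "\<And>k. separated_after f \<epsilon> k x y" and "\<epsilon> > 0"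
  shows "(x, y) \<notin> Asy f"
  using frequently_separated_not_eventually_close[OF assms(1)] order_tendstoD(2)[OF _ assms(2)]
  unfolding Asy_def by blast

lemma frequently_separated_limsup:
  assumes "\<And>k. separated_after f \<epsilon> k x y"
  shows "ereal \<epsilon> \<le> limsup (\<lambda>n. ereal (dist ((f ^^ n) x) ((f ^^ n) y)))"
proof (rule ccontr)
  assume "\<not> ?thesis"
  then have "eventually (\<lambda>n. ereal (dist ((f ^^ n) x) ((f ^^ n) y)) < ereal \<epsilon>) sequentially"
    by (intro Limsup_lessD) simp
  with frequently_separated_not_eventually_close[OF assms] show False
    by simp
qed

lemma scrambled_union:
  fixes D C :: "nat \<Rightarrow> 'a::metric_space set"
  assumes "\<And>n. D n \<subseteq> C n" and "\<And>n. syndetically_scrambled f \<delta> (C n)" and "\<epsilon> \<le> \<delta>" "\<epsilon> > 0"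
    and prox: "(\<Union>n. D n) \<times> (\<Union>n. D n) \<subseteq> SProx f"
    and separated: "\<And>i j x y k. i \<noteq> j \<Longrightarrow> x \<in> D i \<Longrightarrow> y \<in> D j \<Longrightarrow> separated_after f \<epsilon> k x y"
    and "\<exists>x\<in>D 0. \<exists>y\<in>D 0. x \<noteq> y"
  shows "syndetically_scrambled f \<epsilon> (\<Union>n. D n)"
proof -
  have "(x, y) \<in> SProx f - Asy f \<and> ereal \<epsilon> \<le> limsup (\<lambda>n. ereal (dist ((f ^^ n) x) ((f ^^ n) y)))"
    if "x \<in> D i" "y \<in> D j" "x \<noteq> y" for x y i j
  proof (cases "i = j")
    case True
    then have "(x, y) \<in> SProx f - Asy f" "ereal \<delta> \<le> limsup (\<lambda>n. ereal (dist ((f ^^ n) x) ((f ^^ n) y)))"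
      using assms(1,2)[of i] that unfolding syndetically_scrambled_def by blast+
    then show ?thesis
      using \<open>\<epsilon> \<le> \<delta>\<close> by (meson ereal_less_eq(3) order_trans)
  next
    case False
    then have "\<And>k. separated_after f \<epsilon> k x y"
      using separated that by blast
    moreover have "(x, y) \<in> SProx f"
      using prox that by blast
    ultimately show ?thesis
      using frequently_separated_not_Asy[of f \<epsilon> x y] \<open>\<epsilon> > 0\<close> frequently_separated_limsup[of f \<epsilon> x y]
      by blast
  qed
  then show ?thesis
    unfolding syndetically_scrambled_def using assms(7) by blast
qed

text \<open>The key property of a delta-scrambled set with 2 eps < delta: no point x eventually
  eps-shadows two distinct points of it, since they would then stay within 2 eps of each other.\<close>

lemma scrambled_unique_shadow:
  assumes scrambled: "syndetically_scrambled f \<delta> C" and margin: "2 * \<epsilon> < \<delta>"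
    and "y \<in> C" "y' \<in> C" "y \<noteq> y'"
    and close: "\<And>n. k \<le> n \<Longrightarrow> dist ((f ^^ n) x) ((f ^^ n) y) \<le> \<epsilon>"
    and close': "\<And>n. k \<le> n \<Longrightarrow> dist ((f ^^ n) x) ((f ^^ n) y') \<le> \<epsilon>"
  shows False
proof -
  have "dist ((f ^^ n) y) ((f ^^ n) y') \<le> 2 * \<epsilon>" if "k \<le> n" for n
    using dist_triangle3[of "(f ^^ n) y" "(f ^^ n) y'" "(f ^^ n) x"] close[OF that] close'[OF that]
    by linarith
  then have "limsup (\<lambda>n. ereal (dist ((f ^^ n) y) ((f ^^ n) y'))) \<le> ereal (2 * \<epsilon>)"
    by (intro Limsup_bounded) (auto simp: eventually_sequentially)
  moreover have "ereal \<delta> \<le> limsup (\<lambda>n. ereal (dist ((f ^^ n) y) ((f ^^ n) y')))"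
    using scrambled assms(3-5) unfolding syndetically_scrambled_def by blast
  ultimately show False
    using margin by (meson ereal_less_eq(3) not_le order_trans)
qed

lemma scrambled_separated_point:
  assumes scrambled: "syndetically_scrambled f \<delta> C" and margin: "2 * \<epsilon> < \<delta>"
    and "y0 \<in> C" "y0 islimpt C" "s > 0"
  obtains y where "y \<in> C" "dist y y0 < s" "separated_after f \<epsilon> k x y"
proof -
  obtain y' where y': "y' \<in> C" "y' \<noteq> y0" "dist y' y0 < s"
    using assms(4,5) unfolding islimpt_approachable by blast
  have "separated_after f \<epsilon> k x y0 \<or> separated_after f \<epsilon> k x y'"
    using scrambled_unique_shadow[OF scrambled margin \<open>y0 \<in> C\<close> y'(1) y'(2)[symmetric]]
    unfolding separated_after_def by (meson not_le)
  then show ?thesis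
    using that \<open>y0 \<in> C\<close> \<open>s > 0\<close> y' by auto
qed

lemma funpow_maps_into: "f ` X \<subseteq> X \<Longrightarrow> x \<in> X \<Longrightarrow> (f ^^ n) x \<in> X"
  by (induction n) auto

lemma continuous_on_funpow:
  assumes "f ` X \<subseteq> X" and "continuous_on X f"
  shows "continuous_on X (f ^^ n)"
proof (induction n)
  case 0
  show ?case by simp
next
  case (Suc n)
  have "(f ^^ n) ` X \<subseteq> X"
    using funpow_maps_into[OF assms(1)] by blast
  then have "continuous_on X (f \<circ> (f ^^ n))"
    by (intro continuous_on_compose Suc continuous_on_subset[OF assms(2)])
  then show ?case by simp
qed

text \<open>Separation after time k is an open condition: it is witnessed by a single iterate f^n,
  which is continuous, so it persists for all pairs sufficiently close to a separated pair.\<close>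

lemma separated_after_stable:
  assumes maps: "f ` X \<subseteq> X" and cont: "continuous_on X f"
    and "x0 \<in> X" "y0 \<in> X" and sep: "separated_after f \<epsilon> k x0 y0"
  obtains d where "d > 0"
    "\<And>x y. x \<in> X \<Longrightarrow> y \<in> X \<Longrightarrow> dist x x0 < d \<Longrightarrow> dist y y0 < d \<Longrightarrow> separated_after f \<epsilon> k x y"
proof -
  obtain n where n: "k \<le> n" "\<epsilon> < dist ((f ^^ n) x0) ((f ^^ n) y0)"
    using sep unfolding separated_after_def by blast
  define \<eta> where "\<eta> = (dist ((f ^^ n) x0) ((f ^^ n) y0) - \<epsilon>) / 2"
  have "\<eta> > 0" using n unfolding \<eta>_def by simp
  note cont_n = continuous_on_funpow[OF maps cont, of n, unfolded continuous_on_iff]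
  obtain d1 where d1: "d1 > 0" "\<And>x. x \<in> X \<Longrightarrow> dist x x0 < d1 \<Longrightarrow> dist ((f ^^ n) x) ((f ^^ n) x0) < \<eta>"
    using cont_n \<open>x0 \<in> X\<close> \<open>\<eta> > 0\<close> by blast
  obtain d2 where d2: "d2 > 0" "\<And>y. y \<in> X \<Longrightarrow> dist y y0 < d2 \<Longrightarrow> dist ((f ^^ n) y) ((f ^^ n) y0) < \<eta>"
    using cont_n \<open>y0 \<in> X\<close> \<open>\<eta> > 0\<close> by blast
  have "separated_after f \<epsilon> k x y"
    if "x \<in> X" "y \<in> X" "dist x x0 < min d1 d2" "dist y y0 < min d1 d2" for x y
  proof -
    have "dist ((f ^^ n) x0) ((f ^^ n) y0)
        \<le> dist ((f ^^ n) x) ((f ^^ n) x0) + dist ((f ^^ n) x) ((f ^^ n) y) + dist ((f ^^ n) y) ((f ^^ n) y0)"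
      using dist_triangle3[of "(f ^^ n) x0" "(f ^^ n) y0" "(f ^^ n) x"]
        dist_triangle[of "(f ^^ n) x" "(f ^^ n) y0" "(f ^^ n) y"] by linarith
    then have "\<epsilon> < dist ((f ^^ n) x) ((f ^^ n) y)"
      using d1(2)[of x] d2(2)[of y] that unfolding \<eta>_def by simp
    then show ?thesis
      using n(1) unfolding separated_after_def by blast
  qed
  then show ?thesis
    using that[of "min d1 d2"] d1(1) d2(1) by simp
qed

lemma separate_balls:
  assumes maps: "f ` X \<subseteq> X" and cont: "continuous_on X f"
    and "C \<subseteq> X" and scrambled: "syndetically_scrambled f \<delta> C" and margin: "2 * \<epsilon> < \<delta>"
    and "x0 \<in> X" "y0 \<in> C" "y0 islimpt C" "r > 0" "s > 0"
  obtains y1 r1 s1 where "y1 \<in> C" "0 < r1" "r1 \<le> r" "0 < s1" "s1 \<le> s" "cball y1 s1 \<subseteq> cball y0 s"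
    "\<And>x y. x \<in> X \<inter> cball x0 r1 \<Longrightarrow> y \<in> X \<inter> cball y1 s1 \<Longrightarrow> separated_after f \<epsilon> k x y"
proof -
  obtain y1 where y1: "y1 \<in> C" "dist y1 y0 < s / 2" "separated_after f \<epsilon> k x0 y1"
    using scrambled_separated_point[OF scrambled margin \<open>y0 \<in> C\<close> \<open>y0 islimpt C\<close>, of "s / 2"] \<open>s > 0\<close>
    by auto
  obtain d where d: "d > 0"
    "\<And>x y. x \<in> X \<Longrightarrow> y \<in> X \<Longrightarrow> dist x x0 < d \<Longrightarrow> dist y y1 < d \<Longrightarrow> separated_after f \<epsilon> k x y"
    using separated_after_stable[OF maps cont \<open>x0 \<in> X\<close> _ y1(3)] y1(1) \<open>C \<subseteq> X\<close> by blast
  have "cball y1 (min (s / 2) (d / 2)) \<subseteq> cball y0 s"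
  proof
    fix z
    assume "z \<in> cball y1 (min (s / 2) (d / 2))"
    moreover have "dist y0 z \<le> dist y0 y1 + dist y1 z"
      by (rule dist_triangle)
    ultimately show "z \<in> cball y0 s"
      using y1(2) by (simp add: dist_commute)
  qed
  moreover have "separated_after f \<epsilon> k x y"
    if "x \<in> X \<inter> cball x0 (min r (d / 2))" "y \<in> X \<inter> cball y1 (min (s / 2) (d / 2))" for x y
    using that d(1) by (intro d(2)) (auto simp: dist_commute)
  ultimately show ?thesis
    using that[of y1 "min r (d / 2)" "min (s / 2) (d / 2)"] y1(1) d(1) \<open>r > 0\<close> \<open>s > 0\<close> by auto
qed

lemma perfect_split_ball:
  assumes "y \<in> A" "y islimpt A" "r > 0" "b > 0"
  obtains a r' where "a \<in> A" "0 < r'" "r' < b"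
    "cball y r' \<subseteq> cball y r" "cball a r' \<subseteq> cball y r" "cball y r' \<inter> cball a r' = {}"
proof -
  obtain a where a: "a \<in> A" "a \<noteq> y" "dist a y < r / 2"
    using assms(2,3) unfolding islimpt_approachable by (meson half_gt_zero)
  define r' where "r' = min (dist a y / 3) (min (r / 2) (b / 2))"
  have r': "0 < r'" "r' < b" "r' \<le> dist a y / 3" "r' \<le> r / 2"
    using a(2) assms(3,4) unfolding r'_def by auto
  have "cball a r' \<subseteq> cball y r"
  proof
    fix z
    assume "z \<in> cball a r'"
    then have "dist y z \<le> dist y a + dist a z"
      by (simp add: dist_triangle)
    then show "z \<in> cball y r"
      using \<open>z \<in> cball a r'\<close> a(3) r'(4) by (simp add: dist_commute)
  qed
  moreover have "cball y r' \<subseteq> cball y r"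
    using r'(4) assms(3) by auto
  moreover have "cball y r' \<inter> cball a r' = {}"
  proof (rule ccontr)
    assume "cball y r' \<inter> cball a r' \<noteq> {}"
    then obtain z where "dist y z \<le> r'" "dist a z \<le> r'"
      by auto
    then have "dist a y \<le> 2 * r'"
      using dist_triangle[of a y z] by (simp add: dist_commute)
    then show False
      using r'(1,3) by linarith
  qed
  ultimately show ?thesis
    using that a(1) r'(1,2) by blast
qed

lemma decreasing_compact_Inter_nonempty:
  fixes F :: "nat \<Rightarrow> 'a::t2_space set"
  assumes "\<And>n. compact (F n)" "\<And>n. F n \<noteq> {}" "\<And>m n. m \<le> n \<Longrightarrow> F n \<subseteq> F m"
  obtains z where "\<And>n. z \<in> F n"
proof -
  have "F 0 \<inter> (\<Inter>n. F n) \<noteq> {}"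
  proof (rule compact_imp_fip_image[OF assms(1)])
    show "closed (F n)" for n
      using assms(1) by (rule compact_imp_closed)
    fix I :: "nat set"
    assume "finite I"
    then have "F (Max (insert 0 I)) \<subseteq> F n" if "n \<in> insert 0 I" for n
      using assms(3) Max_ge[of "insert 0 I" n] that by blast
    then have "F (Max (insert 0 I)) \<subseteq> F 0 \<inter> (\<Inter>n\<in>I. F n)"
      by blast
    then show "F 0 \<inter> (\<Inter>n\<in>I. F n) \<noteq> {}"
      using assms(2) by blast
  qed
  then show ?thesis
    using that by blast
qed

lemma totally_disconnected_subset:
  "totally_disconnected C \<Longrightarrow> A \<subseteq> C \<Longrightarrow> totally_disconnected A"
  unfolding totally_disconnected_def by blast

lemma cantor_set_two_points:
  assumes "cantor_set C"
  shows "\<exists>x\<in>C. \<exists>y\<in>C. x \<noteq> y"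
proof -
  obtain x where "x \<in> C" "x islimpt C"
    using assms unfolding cantor_set_def by blast
  then show ?thesis
    unfolding islimpt_approachable by (meson zero_less_one)
qed

lemma mycielski_nonempty:
  assumes "mycielski S"
  shows "S \<noteq> {}"
proof -
  obtain K :: "nat \<Rightarrow> 'a set" where "\<And>n. cantor_set (K n)" "S = (\<Union>n. K n)"
    using assms unfolding mycielski_def by blast
  then show ?thesis
    unfolding cantor_set_def by blast
qed

definition scheme_limit :: "(bool list \<Rightarrow> 'a set) \<Rightarrow> 'a set" where
  "scheme_limit P = (\<Inter>l. \<Union>s\<in>{s. length s = l}. P s)"

locale cantor_scheme =
  fixes P :: "bool list \<Rightarrow> 'a::metric_space set"
  assumes compact_piece: "\<And>s. compact (P s)"
    and piece_nonempty: "\<And>s. P s \<noteq> {}"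
    and piece_nested: "\<And>s b. P (s @ [b]) \<subseteq> P s"
    and pieces_disjoint: "\<And>s. P (s @ [True]) \<inter> P (s @ [False]) = {}"
    and pieces_shrink: "\<And>e. e > 0 \<Longrightarrow> \<exists>l. \<forall>s. l \<le> length s \<longrightarrow> (\<forall>x\<in>P s. \<forall>y\<in>P s. dist x y < e)"

begin

lemma piece_prefix: "P (s @ t) \<subseteq> P s"
proof (induction t rule: rev_induct)
  case Nil
  show ?case by simp
next
  case (snoc b t)
  then show ?case
    using piece_nested[of "s @ t" b] by auto
qed

lemma limit_memE:
  assumes "x \<in> scheme_limit P"
  obtains s where "length s = l" "x \<in> P s"
  using assms unfolding scheme_limit_def by blast

lemma limit_subset_root: "scheme_limit P \<subseteq> P []"
  unfolding scheme_limit_def by auto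

text \<open>Every piece contains a point of the limit: follow the branch s, False, False, \<dots>\<close>

lemma limit_meets_piece: "\<exists>z\<in>scheme_limit P. z \<in> P s"
proof -
  define F where "F k = P (s @ replicate k False)" for k
  have "F n \<subseteq> F m" if "m \<le> n" for m n
  proof -
    have "s @ replicate n False = (s @ replicate m False) @ replicate (n - m) False"
      using that by (simp flip: replicate_add)
    then show ?thesis
      unfolding F_def by (metis piece_prefix)
  qed
  then obtain z where z: "\<And>k. z \<in> F k"
    using decreasing_compact_Inter_nonempty[of F] compact_piece piece_nonempty
    unfolding F_def by blast
  have "z \<in> (\<Union>t\<in>{t. length t = l}. P t)" for l
  proof (cases "length s \<le> l")
    case True
    then show ?thesis
      using z[of "l - length s"] unfolding F_def by (intro UN_I[of "s @ replicate (l - length s) False"]) auto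
  next
    case False
    have "P s \<subseteq> P (take l s)"
      using piece_prefix[of "take l s" "drop l s"] by simp
    then show ?thesis
      using False z[of 0] unfolding F_def by (intro UN_I[of "take l s"]) auto
  qed
  then show ?thesis
    using z[of 0] unfolding F_def scheme_limit_def by auto
qed

text \<open>The limit is compact: a closed subset of the compact root piece.\<close>

lemma limit_compact: "compact (scheme_limit P)"
proof -
  have "closed (\<Union>s\<in>{s::bool list. length s = l}. P s)" for l
    using finite_lists_length_eq[of "UNIV :: bool set" l] compact_piece
    by (intro closed_UN) (auto intro: compact_imp_closed)
  then have "closed (scheme_limit P)"
    unfolding scheme_limit_def by blast
  then show ?thesis
    using limit_subset_root compact_piece by (metis compact_Int_closed inf.absorb_iff2)
qed

text \<open>The limit has no isolated points: a point in the piece of s is approximated by limit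
  points from the two (disjoint) children of s, one of which differs from it.\<close>

lemma limit_perfect:
  assumes "x \<in> scheme_limit P"
  shows "x islimpt scheme_limit P"
  unfolding islimpt_approachable
proof (intro allI impI)
  fix e :: real
  assume "e > 0"
  then obtain l where l: "\<And>s x y. l \<le> length s \<Longrightarrow> x \<in> P s \<Longrightarrow> y \<in> P s \<Longrightarrow> dist x y < e"
    using pieces_shrink by blast
  obtain s where s: "length s = l" "x \<in> P s"
    using limit_memE[OF assms] by blast
  obtain y0 y1 where "y0 \<in> scheme_limit P" "y0 \<in> P (s @ [True])"
    and "y1 \<in> scheme_limit P" "y1 \<in> P (s @ [False])"
    using limit_meets_piece by meson
  moreover have "y0 \<noteq> y1"
    using pieces_disjoint calculation by blast
  ultimately obtain y where "y \<in> scheme_limit P" "y \<in> P s" "y \<noteq> x"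
    using piece_nested[of s True] piece_nested[of s False] by blast
  then show "\<exists>y\<in>scheme_limit P. y \<noteq> x \<and> dist y x < e"
    using l[of s y x] s by auto
qed

lemma cantor_set_limit:
  assumes "P [] \<subseteq> C" and "totally_disconnected C"
  shows "cantor_set (scheme_limit P)"
proof -
  have "scheme_limit P \<noteq> {}"
    using limit_meets_piece by blast
  moreover have "totally_disconnected (scheme_limit P)"
    using totally_disconnected_subset[OF assms(2)] limit_subset_root assms(1) by blast
  ultimately show ?thesis
    unfolding cantor_set_def using limit_compact limit_perfect by blast
qed

end

definition disc :: "'a::metric_space \<times> real \<Rightarrow> 'a set" where
  "disc p = cball (fst p) (snd p)"

text \<open>The nodes of stage m of the construction: at stage m the tree for the n-th Cantor set
  (n <= m) has grown to depth m - n, so its nodes are the words of length m - n.\<close>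

definition level :: "nat \<Rightarrow> (nat \<times> bool list) set" where
  "level m = {(n, s). n \<le> m \<and> length s = m - n}"

text \<open>Each stage has finitely many nodes, which makes the separation step a finite induction.\<close>

lemma finite_level: "finite (level m)"
proof -
  have "level m \<subseteq> {..m} \<times> {s. set s \<subseteq> UNIV \<and> length s \<le> m}"
    unfolding level_def by auto
  moreover have "finite ({..m} \<times> {s :: bool list. set s \<subseteq> UNIV \<and> length s \<le> m})"
    using finite_lists_length_le[OF finite_class.finite_UNIV, of m] by blast
  ultimately show ?thesis
    by (rule finite_subset)
qed

lemma level_self: "(n, s) \<in> level (n + length s)"
  unfolding level_def by simp

lemma level_child: "(n, s) \<in> level m \<Longrightarrow> (n, s @ [b]) \<in> level (Suc m)"
  unfolding level_def by auto

lemma level_Suc_cases: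
  assumes "(n, t) \<in> level (Suc m)"
  obtains "n = Suc m" "t = []"
    | s b where "t = s @ [b]" "(n, s) \<in> level m"
proof (cases "n \<le> m")
  case True
  then have "t \<noteq> []" "(n, butlast t) \<in> level m"
    using assms unfolding level_def by auto
  then show ?thesis
    using that(2)[of "butlast t" "last t"] by simp
next
  case False
  then show ?thesis
    using assms that(1) unfolding level_def by auto
qed

locale scrambled_family =
  fixes X :: "'a::metric_space set" and f :: "'a \<Rightarrow> 'a" and \<epsilon> \<delta> :: real
    and C :: "nat \<Rightarrow> 'a set"
  assumes maps_into: "f ` X \<subseteq> X" and continuous: "continuous_on X f"
    and margin: "2 * \<epsilon> < \<delta>"
    and family_in: "\<And>n. C n \<subseteq> X"
    and family_cantor: "\<And>n. cantor_set (C n)"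
    and family_scrambled: "\<And>n. syndetically_scrambled f \<delta> (C n)"

begin

lemma family_perfect: "y \<in> C n \<Longrightarrow> y islimpt C n"
  using family_cantor[of n] unfolding cantor_set_def by blast

lemma family_nonempty: "C n \<noteq> {}"
  using family_cantor[of n] unfolding cantor_set_def by blast

definition centred :: "(nat \<times> bool list) set \<Rightarrow> (nat \<times> bool list \<Rightarrow> 'a \<times> real) \<Rightarrow> bool" where
  "centred N g \<longleftrightarrow> (\<forall>l\<in>N. fst (g l) \<in> C (fst l) \<and> 0 < snd (g l))"

definition shrinks ::
    "(nat \<times> bool list) set \<Rightarrow> (nat \<times> bool list \<Rightarrow> 'a \<times> real) \<Rightarrow> (nat \<times> bool list \<Rightarrow> 'a \<times> real) \<Rightarrow> bool" where
  "shrinks N g' g \<longleftrightarrow> centred N g' \<and> (\<forall>l\<in>N. snd (g' l) \<le> snd (g l) \<and> disc (g' l) \<subseteq> disc (g l))"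

lemma shrinks_refl: "centred N g \<Longrightarrow> shrinks N g g"
  unfolding shrinks_def by simp

lemma shrinks_trans: "shrinks N g2 g1 \<Longrightarrow> shrinks N g1 g \<Longrightarrow> shrinks N g2 g"
  unfolding shrinks_def by (meson order_trans)

lemma shrinksD:
  assumes "shrinks N g' g" "l \<in> N"
  shows "fst (g' l) \<in> C (fst l)" "0 < snd (g' l)" "snd (g' l) \<le> snd (g l)" "disc (g' l) \<subseteq> disc (g l)"
  using assms unfolding shrinks_def centred_def by auto

lemma separate_pair:
  assumes "centred N g" "l \<in> N" "l' \<in> N" "l \<noteq> l'"
  obtains g' where "shrinks N g' g"
    "\<And>x y. x \<in> X \<inter> disc (g' l) \<Longrightarrow> y \<in> X \<inter> disc (g' l') \<Longrightarrow> separated_after f \<epsilon> k x y"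
proof -
  let ?x0 = "fst (g l)" and ?r = "snd (g l)" and ?y0 = "fst (g l')" and ?s = "snd (g l')"
  have "?x0 \<in> X" "?y0 \<in> C (fst l')" "?r > 0" "?s > 0"
    using assms family_in unfolding centred_def by blast+
  then obtain y1 r1 s1 where sep: "y1 \<in> C (fst l')" "0 < r1" "r1 \<le> ?r" "0 < s1" "s1 \<le> ?s"
      "cball y1 s1 \<subseteq> cball ?y0 ?s"
      "\<And>x y. x \<in> X \<inter> cball ?x0 r1 \<Longrightarrow> y \<in> X \<inter> cball y1 s1 \<Longrightarrow> separated_after f \<epsilon> k x y"
    using separate_balls[OF maps_into continuous family_in family_scrambled margin \<open>?x0 \<in> X\<close>
        \<open>?y0 \<in> C (fst l')\<close> family_perfect[OF \<open>?y0 \<in> C (fst l')\<close>] \<open>?r > 0\<close> \<open>?s > 0\<close>, where k = k]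
    by blast
  define g' where "g' = g(l := (?x0, r1), l' := (y1, s1))"
  have "cball ?x0 r1 \<subseteq> cball ?x0 ?r"
    using sep(3) by (rule subset_cball)
  then have "shrinks N g' g"
    using assms(1,4) sep(1-6) unfolding shrinks_def centred_def g'_def disc_def by auto
  moreover have "disc (g' l) = cball ?x0 r1" "disc (g' l') = cball y1 s1"
    using assms(4) unfolding g'_def disc_def by auto
  then have "separated_after f \<epsilon> k x y"
    if "x \<in> X \<inter> disc (g' l)" "y \<in> X \<inter> disc (g' l')" for x y
    using sep(7) that by simp
  ultimately show ?thesis
    by (rule that)
qed

text \<open>Iterating over a finite set of node pairs separates all of them simultaneously, since
  separation survives further shrinking.\<close>

lemma separate_pairs:
  assumes "finite PP" "PP \<subseteq> N \<times> N" "\<forall>(l, l')\<in>PP. l \<noteq> l'" "centred N g"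
  shows "\<exists>g'. shrinks N g' g \<and>
    (\<forall>l l' x y. (l, l') \<in> PP \<longrightarrow> x \<in> X \<inter> disc (g' l) \<longrightarrow> y \<in> X \<inter> disc (g' l') \<longrightarrow>
       separated_after f \<epsilon> k x y)"
  using assms(1-3)
proof (induction PP rule: finite_induct)
  case empty
  show ?case
    using shrinks_refl[OF assms(4)] by blast
next
  case (insert p PP)
  obtain l l' where p: "p = (l, l')" "l \<in> N" "l' \<in> N" "l \<noteq> l'"
    using insert.prems by (cases p) auto
  have "PP \<subseteq> N \<times> N" "\<forall>(l, l')\<in>PP. l \<noteq> l'"
    using insert.prems by auto
  then obtain g1 where g1: "shrinks N g1 g"
    and sep1: "\<And>a b x y. (a, b) \<in> PP \<Longrightarrow> x \<in> X \<inter> disc (g1 a) \<Longrightarrow> y \<in> X \<inter> disc (g1 b) \<Longrightarrow>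
      separated_after f \<epsilon> k x y"
    using insert.IH by blast
  obtain g2 where g2: "shrinks N g2 g1"
    and sep2: "\<And>x y. x \<in> X \<inter> disc (g2 l) \<Longrightarrow> y \<in> X \<inter> disc (g2 l') \<Longrightarrow> separated_after f \<epsilon> k x y"
    using separate_pair[of N g1 l l'] g1 p unfolding shrinks_def by blast
  have "separated_after f \<epsilon> k x y"
    if "(a, b) \<in> insert p PP" "x \<in> X \<inter> disc (g2 a)" "y \<in> X \<inter> disc (g2 b)" for a b x y
  proof (cases "(a, b) = p")
    case True
    then show ?thesis using p sep2 that by auto
  next
    case False
    then have "(a, b) \<in> PP" "a \<in> N" "b \<in> N"
      using that(1) insert.prems(1) by auto
    then show ?thesis
      using sep1[of a b x y] shrinksD(4)[OF g2] that(2,3) by blast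
  qed
  then show ?case
    using shrinks_trans[OF g2 g1] by blast
qed

definition admissible :: "nat \<Rightarrow> (nat \<times> bool list \<Rightarrow> 'a \<times> real) \<Rightarrow> bool" where
  "admissible m g \<longleftrightarrow> centred (level m) g \<and> (\<forall>l\<in>level m. snd (g l) < 1 / real (Suc m)) \<and>
     (\<forall>l\<in>level m. \<forall>l'\<in>level m. fst l \<noteq> fst l' \<longrightarrow>
        (\<forall>x\<in>C (fst l) \<inter> disc (g l). \<forall>y\<in>C (fst l') \<inter> disc (g l'). separated_after f \<epsilon> m x y))"

definition refines :: "nat \<Rightarrow> (nat \<times> bool list \<Rightarrow> 'a \<times> real) \<Rightarrow> (nat \<times> bool list \<Rightarrow> 'a \<times> real) \<Rightarrow> bool" where
  "refines m g g' \<longleftrightarrow> admissible (Suc m) g' \<and>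
     (\<forall>n s b. (n, s) \<in> level m \<longrightarrow> disc (g' (n, s @ [b])) \<subseteq> disc (g (n, s))) \<and>
     (\<forall>n s. (n, s) \<in> level m \<longrightarrow> disc (g' (n, s @ [True])) \<inter> disc (g' (n, s @ [False])) = {})"

lemma admissible_start: "\<exists>g. admissible 0 g"
proof -
  obtain x where "x \<in> C 0"
    using family_nonempty by blast
  then have "admissible 0 (\<lambda>l. (x, 1 / 2))"
    unfolding admissible_def centred_def level_def by auto
  then show ?thesis by blast
qed

lemma split_children:
  assumes "admissible m g"
  obtains h where "centred (level (Suc m)) h" "\<forall>l\<in>level (Suc m). snd (h l) < 1 / real (Suc (Suc m))"
    "\<And>n s b. (n, s) \<in> level m \<Longrightarrow> disc (h (n, s @ [b])) \<subseteq> disc (g (n, s))"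
    "\<And>n s. (n, s) \<in> level m \<Longrightarrow> disc (h (n, s @ [True])) \<inter> disc (h (n, s @ [False])) = {}"
proof -
  let ?b = "1 / real (Suc (Suc m))"
  have "?b > 0"
    by simp
  then obtain \<rho> where "0 < \<rho>" "\<rho> < ?b"
    using dense by blast
  have "\<exists>p. fst p \<in> C (fst l) \<and> 0 < snd p \<and> snd p < ?b \<and>
      cball (fst (g l)) (snd p) \<subseteq> disc (g l) \<and> cball (fst p) (snd p) \<subseteq> disc (g l) \<and>
      cball (fst (g l)) (snd p) \<inter> cball (fst p) (snd p) = {}"
    if "l \<in> level m" for l
  proof -
    have "fst (g l) \<in> C (fst l)" "snd (g l) > 0"
      using assms that unfolding admissible_def centred_def by auto
    then obtain a r where "a \<in> C (fst l)" "0 < r" "r < ?b"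
      "cball (fst (g l)) r \<subseteq> disc (g l)" "cball a r \<subseteq> disc (g l)" "cball (fst (g l)) r \<inter> cball a r = {}"
      using perfect_split_ball[OF _ family_perfect _ \<open>?b > 0\<close>] unfolding disc_def by blast
    then show ?thesis
      by (intro exI[of _ "(a, r)"]) simp
  qed
  then obtain sp where sp: "\<And>l. l \<in> level m \<Longrightarrow> fst (sp l) \<in> C (fst l) \<and> 0 < snd (sp l) \<and> snd (sp l) < ?b \<and>
      cball (fst (g l)) (snd (sp l)) \<subseteq> disc (g l) \<and> cball (fst (sp l)) (snd (sp l)) \<subseteq> disc (g l) \<and>
      cball (fst (g l)) (snd (sp l)) \<inter> cball (fst (sp l)) (snd (sp l)) = {}"
    by metis
  obtain pt where pt: "pt \<in> C (Suc m)"
    using family_nonempty by blast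
  define h where "h l = (if fst l \<le> m \<and> snd l \<noteq> []
      then (if last (snd l) then fst (g (fst l, butlast (snd l))) else fst (sp (fst l, butlast (snd l))),
            snd (sp (fst l, butlast (snd l))))
      else (pt, \<rho>))" for l
  have child: "h (n, s @ [b]) = (if b then fst (g (n, s)) else fst (sp (n, s)), snd (sp (n, s)))"
    if "(n, s) \<in> level m" for n s b
    using that unfolding h_def level_def by auto
  have "fst (h (n, t)) \<in> C n \<and> 0 < snd (h (n, t)) \<and> snd (h (n, t)) < ?b"
    if "(n, t) \<in> level (Suc m)" for n t
    using that
  proof (cases rule: level_Suc_cases)
    case 1
    then show ?thesis
      using pt \<open>0 < \<rho>\<close> \<open>\<rho> < ?b\<close> unfolding h_def by auto
  next
    case (2 s b)
    then have "fst (g (n, s)) \<in> C n"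
      using assms unfolding admissible_def centred_def by auto
    then show ?thesis
      using 2 child[of n s b] sp[of "(n, s)"] by auto
  qed
  then have "fst (h l) \<in> C (fst l) \<and> 0 < snd (h l) \<and> snd (h l) < ?b" if "l \<in> level (Suc m)" for l
    using that by (metis prod.collapse)
  moreover have "disc (h (n, s @ [b])) \<subseteq> disc (g (n, s))" if "(n, s) \<in> level m" for n s b
    using child[OF that] sp[OF that] unfolding disc_def by auto
  moreover have "disc (h (n, s @ [True])) \<inter> disc (h (n, s @ [False])) = {}" if "(n, s) \<in> level m" for n s
    using child[OF that] sp[OF that] unfolding disc_def by auto
  ultimately show ?thesis
    using that unfolding centred_def by blast
qed

text \<open>Every admissible stage has a refinement: split, then separate all pairs of nodes of
  different classes.\<close>

lemma refine_step:
  assumes "admissible m g"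
  shows "\<exists>g'. refines m g g'"
proof -
  obtain h where h: "centred (level (Suc m)) h" "\<forall>l\<in>level (Suc m). snd (h l) < 1 / real (Suc (Suc m))"
    "\<And>n s b. (n, s) \<in> level m \<Longrightarrow> disc (h (n, s @ [b])) \<subseteq> disc (g (n, s))"
    "\<And>n s. (n, s) \<in> level m \<Longrightarrow> disc (h (n, s @ [True])) \<inter> disc (h (n, s @ [False])) = {}"
    using split_children[OF assms] by blast
  define PP where "PP = {(l, l'). l \<in> level (Suc m) \<and> l' \<in> level (Suc m) \<and> fst l \<noteq> fst l'}"
  have "PP \<subseteq> level (Suc m) \<times> level (Suc m)" "\<forall>(l, l')\<in>PP. l \<noteq> l'"
    unfolding PP_def by auto
  moreover have "finite PP"
    using finite_level \<open>PP \<subseteq> level (Suc m) \<times> level (Suc m)\<close> by (blast intro: finite_subset)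
  ultimately have "\<exists>g'. shrinks (level (Suc m)) g' h \<and>
      (\<forall>l l' x y. (l, l') \<in> PP \<longrightarrow> x \<in> X \<inter> disc (g' l) \<longrightarrow> y \<in> X \<inter> disc (g' l') \<longrightarrow>
         separated_after f \<epsilon> (Suc m) x y)"
    by (intro separate_pairs h(1))
  then obtain g' where g': "shrinks (level (Suc m)) g' h"
    and sep: "\<forall>l l' x y. (l, l') \<in> PP \<longrightarrow> x \<in> X \<inter> disc (g' l) \<longrightarrow> y \<in> X \<inter> disc (g' l') \<longrightarrow>
         separated_after f \<epsilon> (Suc m) x y"
    by blast
  have "admissible (Suc m) g'"
    unfolding admissible_def
  proof (intro conjI ballI impI)
    show "centred (level (Suc m)) g'"
      using g' unfolding shrinks_def by blast
    show "snd (g' l) < 1 / real (Suc (Suc m))" if "l \<in> level (Suc m)" for l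
      using shrinksD(3)[OF g' that] h(2) that by fastforce
    show "separated_after f \<epsilon> (Suc m) x y"
      if "l \<in> level (Suc m)" "l' \<in> level (Suc m)" "fst l \<noteq> fst l'"
        and "x \<in> C (fst l) \<inter> disc (g' l)" "y \<in> C (fst l') \<inter> disc (g' l')" for l l' x y
    proof -
      have "(l, l') \<in> PP" "x \<in> X" "y \<in> X"
        using that family_in unfolding PP_def by blast+
      then show ?thesis
        using sep that(4,5) by blast
    qed
  qed
  moreover have "disc (g' (n, s @ [b])) \<subseteq> disc (g (n, s))" if "(n, s) \<in> level m" for n s b
    using shrinksD(4)[OF g' level_child[OF that]] h(3)[OF that] by blast
  moreover have "disc (g' (n, s @ [True])) \<inter> disc (g' (n, s @ [False])) = {}" if "(n, s) \<in> level m" for n s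
    using shrinksD(4)[OF g' level_child[OF that]] h(4)[OF that] by blast
  ultimately show ?thesis
    unfolding refines_def by blast
qed

primrec stage :: "nat \<Rightarrow> nat \<times> bool list \<Rightarrow> 'a \<times> real" where
  "stage 0 = (SOME g. admissible 0 g)"
| "stage (Suc m) = (SOME g'. refines m (stage m) g')"

lemma stage_admissible: "admissible m (stage m)"
proof (induction m)
  case 0
  show ?case using someI_ex[OF admissible_start] by simp
next
  case (Suc m)
  have "refines m (stage m) (stage (Suc m))"
    using someI_ex[OF refine_step[OF Suc]] by simp
  then show ?case
    unfolding refines_def by blast
qed

lemma stage_refines: "refines m (stage m) (stage (Suc m))"
  using someI_ex[OF refine_step[OF stage_admissible[of m]]] by simp

text \<open>The piece of the word s in the n-th tree: the part of C n in the ball given to (n, s) at the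
  stage where this node appears.\<close>

definition piece :: "nat \<Rightarrow> bool list \<Rightarrow> 'a set" where
  "piece n s = C n \<inter> disc (stage (n + length s) (n, s))"

lemma stage_at_node:
  "fst (stage (n + length s) (n, s)) \<in> C n" "0 < snd (stage (n + length s) (n, s))"
  "snd (stage (n + length s) (n, s)) < 1 / real (Suc (n + length s))"
  using stage_admissible[of "n + length s"] level_self[of n s]
  unfolding admissible_def centred_def by auto

lemma piece_diameter:
  assumes "x \<in> piece n s" "y \<in> piece n s"
  shows "dist x y < 2 / real (Suc (n + length s))"
proof -
  let ?c = "fst (stage (n + length s) (n, s))" and ?r = "snd (stage (n + length s) (n, s))"
  have "dist x y \<le> dist ?c x + dist ?c y"
    by (rule dist_triangle3)
  also have "\<dots> \<le> 2 * ?r"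
    using assms unfolding piece_def disc_def by auto
  finally show ?thesis
    using stage_at_node(3)[of n s] by simp
qed

lemma piece_cantor_scheme: "cantor_scheme (piece n)"
proof
  fix s
  show "compact (piece n s)"
    using family_cantor[of n] unfolding piece_def disc_def cantor_set_def
    by (intro compact_Int_closed) auto
  show "piece n s \<noteq> {}"
    using stage_at_node[of n s] unfolding piece_def disc_def by force
  have "(n, s) \<in> level (n + length s)"
    by (rule level_self)
  then have "disc (stage (Suc (n + length s)) (n, s @ [b])) \<subseteq> disc (stage (n + length s) (n, s))"
    and "disc (stage (Suc (n + length s)) (n, s @ [True])) \<inter> disc (stage (Suc (n + length s)) (n, s @ [False])) = {}"
    for b
    using stage_refines[of "n + length s"] unfolding refines_def by blast+
  then show "piece n (s @ [b]) \<subseteq> piece n s" "piece n (s @ [True]) \<inter> piece n (s @ [False]) = {}" for b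
    unfolding piece_def by (auto simp del: stage.simps)
next
  fix e :: real
  assume "e > 0"
  then obtain l :: nat where "2 / e < real l"
    using reals_Archimedean2 by blast
  have "dist x y < e" if "l \<le> length s" "x \<in> piece n s" "y \<in> piece n s" for s x y
  proof -
    have "2 < real l * e"
      using \<open>2 / e < real l\<close> \<open>e > 0\<close> by (simp add: pos_divide_less_eq)
    also have "\<dots> \<le> real (Suc (n + length s)) * e"
      using that(1) \<open>e > 0\<close> by (intro mult_right_mono) auto
    finally have "2 / real (Suc (n + length s)) < e"
      by (simp add: pos_divide_less_eq mult.commute del: of_nat_Suc)
    then show ?thesis
      using piece_diameter[OF that(2,3)] by linarith
  qed
  then show "\<exists>l. \<forall>s. l \<le> length s \<longrightarrow> (\<forall>x\<in>piece n s. \<forall>y\<in>piece n s. dist x y < e)"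
    by blast
qed

lemma pieces_separated:
  assumes "n \<noteq> n'" "n + length s = n' + length t" "x \<in> piece n s" "y \<in> piece n' t"
  shows "separated_after f \<epsilon> (n + length s) x y"
proof -
  have "(n, s) \<in> level (n + length s)" "(n', t) \<in> level (n + length s)"
    using level_self[of n s] level_self[of n' t] assms(2) by simp_all
  then show ?thesis
    using stage_admissible[of "n + length s"] assms unfolding admissible_def piece_def by fastforce
qed

definition core :: "nat \<Rightarrow> 'a set" where
  "core n = scheme_limit (piece n)"

lemma core_subset: "core n \<subseteq> C n"
  using cantor_scheme.limit_subset_root[OF piece_cantor_scheme] unfolding core_def piece_def by blast

lemma core_cantor: "cantor_set (core n)"
proof -
  have "piece n [] \<subseteq> C n" "totally_disconnected (C n)"
    using family_cantor[of n] unfolding piece_def cantor_set_def by auto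
  then show ?thesis
    unfolding core_def by (rule cantor_scheme.cantor_set_limit[OF piece_cantor_scheme])
qed

text \<open>Points of different cores are separated after every time: both lie in pieces created at
  an arbitrarily late common stage.\<close>

lemma cores_separated:
  assumes "i \<noteq> j" "x \<in> core i" "y \<in> core j"
  shows "separated_after f \<epsilon> k x y"
proof -
  define m where "m = i + j + k"
  obtain s where s: "length s = m - i" "x \<in> piece i s"
    using cantor_scheme.limit_memE[OF piece_cantor_scheme assms(2)[unfolded core_def]] by blast
  obtain t where t: "length t = m - j" "y \<in> piece j t"
    using cantor_scheme.limit_memE[OF piece_cantor_scheme assms(3)[unfolded core_def]] by blast
  have "i + length s = m" "j + length t = m"
    using s(1) t(1) unfolding m_def by auto
  then have "separated_after f \<epsilon> m x y"
    using pieces_separated[OF assms(1) _ s(2) t(2)] by simp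
  then show ?thesis
    using separated_after_mono[of f \<epsilon> m x y k] unfolding m_def by simp
qed

lemma mycielski_cores: "mycielski (\<Union>n. core n)"
  unfolding mycielski_def by (intro exI[of _ core]) (simp add: core_cantor)

lemma scrambled_cores:
  assumes "\<epsilon> > 0" and "(\<Union>n. C n) \<times> (\<Union>n. C n) \<subseteq> SProx f"
  shows "syndetically_scrambled f \<epsilon> (\<Union>n. core n)"
proof -
  have "\<epsilon> \<le> \<delta>"
    using margin assms(1) by linarith
  moreover have "(\<Union>n. core n) \<times> (\<Union>n. core n) \<subseteq> SProx f"
    using assms(2) core_subset by blast
  ultimately show ?thesis
    by (rule scrambled_union[OF core_subset family_scrambled _ assms(1) _ cores_separated
          cantor_set_two_points[OF core_cantor]])
qed

end

text \<open>A compact metric space has a countable family of nonempty relatively open sets such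
  that every set meeting all of them is dense: the balls of radius 1/(m + 1) around finite nets.\<close>

lemma compact_dense_test_family:
  fixes X :: "'a::metric_space set"
  assumes "compact X" "X \<noteq> {}"
  obtains W :: "nat \<Rightarrow> 'a set"
  where "\<And>n. openin (top_of_set X) (W n)" "\<And>n. W n \<noteq> {}"
    "\<And>T. (\<And>n. T \<inter> W n \<noteq> {}) \<Longrightarrow> X \<subseteq> closure T"
proof -
  have "\<exists>A. A \<subseteq> X \<and> finite A \<and> X \<subseteq> (\<Union>a\<in>A. ball a (1 / real (Suc m)))" for m
  proof -
    have "X \<subseteq> (\<Union>a\<in>X. ball a (1 / real (Suc m)))"
      using centre_in_ball[of _ "1 / real (Suc m)"] by fastforce
    then obtain A where "A \<subseteq> X" "finite A" "X \<subseteq> (\<Union>a\<in>A. ball a (1 / real (Suc m)))"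
      using compactE_image[OF assms(1), of X "\<lambda>a. ball a (1 / real (Suc m))"] by blast
    then show ?thesis
      by blast
  qed
  then have "\<forall>m. \<exists>A. A \<subseteq> X \<and> finite A \<and> X \<subseteq> (\<Union>a\<in>A. ball a (1 / real (Suc m)))"
    by blast
  from choice[OF this] obtain A where A: "\<And>m. A m \<subseteq> X" "\<And>m. finite (A m)"
    "\<And>m. X \<subseteq> (\<Union>a\<in>A m. ball a (1 / real (Suc m)))"
    by blast
  define B where "B = (SIGMA m:UNIV. A m)"
  have "countable B"
    unfolding B_def using A(2) by (simp add: countable_finite)
  have "B \<noteq> {}"
    using A(3)[of 0] assms(2) unfolding B_def by blast
  define W where "W n = X \<inter> ball (snd (from_nat_into B n)) (1 / real (Suc (fst (from_nat_into B n))))" for n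
  have "snd (from_nat_into B n) \<in> X" for n
  proof -
    have "from_nat_into B n \<in> B"
      using \<open>B \<noteq> {}\<close> by (rule from_nat_into)
    then obtain m a where "from_nat_into B n = (m, a)" "a \<in> A m"
      unfolding B_def by blast
    then show ?thesis
      using A(1) by auto
  qed
  then have "snd (from_nat_into B n) \<in> W n" for n
    unfolding W_def by simp
  moreover have "openin (top_of_set X) (W n)" for n
    unfolding W_def by (simp add: openin_open_Int)
  moreover have "X \<subseteq> closure T" if meets: "\<And>n. T \<inter> W n \<noteq> {}" for T
  proof
    fix x
    assume "x \<in> X"
    show "x \<in> closure T"
      unfolding closure_approachable
    proof (intro allI impI)
      fix e :: real
      assume "e > 0"
      then obtain m where m: "1 / real (Suc m) < e / 2"
        using reals_Archimedean[of "e / 2"] by (auto simp: inverse_eq_divide)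
      obtain a where a: "a \<in> A m" "dist a x < 1 / real (Suc m)"
        using A(3)[of m] \<open>x \<in> X\<close> by auto
      then have "(m, a) \<in> B"
        unfolding B_def by simp
      then obtain n where n: "from_nat_into B n = (m, a)"
        using from_nat_into_surj[OF \<open>countable B\<close>] by blast
      obtain t where t: "t \<in> T" "t \<in> W n"
        using meets[of n] by blast
      then have "dist a t < 1 / real (Suc m)"
        unfolding W_def n by simp
      then have "dist t x < e"
        using a(2) m dist_triangle[of t x a] by (simp add: dist_commute)
      then show "\<exists>y\<in>T. dist y x < e"
        using t(1) by blast
    qed
  qed
  ultimately show ?thesis
    using that by blast
qed

theorem proposition3p13:
  fixes X :: "'a::metric_space set" and f :: "'a \<Rightarrow> 'a" and S :: "'a set" and \<epsilon> :: real
  assumes "compact X" and "continuous_on X f" and "f ` X \<subseteq> X"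
    and "\<epsilon> > 0"
    and "S \<subseteq> X" and "X \<subseteq> closure S" and "mycielski S"
    and "S \<times> S \<subseteq> SProx f"
    and "\<And>W. openin (top_of_set X) W \<Longrightarrow> W \<noteq> {} \<Longrightarrow>
           \<exists>C. C \<subseteq> S \<inter> W \<and> cantor_set C \<and> syndetically_scrambled f (3 * \<epsilon>) C"
  shows "\<exists>T. T \<subseteq> S \<and> X \<subseteq> closure T \<and> mycielski T \<and> syndetically_scrambled f \<epsilon> T"
proof -
  have "X \<noteq> {}"
    using mycielski_nonempty[OF assms(7)] assms(5) by blast
  then obtain W :: "nat \<Rightarrow> 'a set" where W: "\<And>n. openin (top_of_set X) (W n)" "\<And>n. W n \<noteq> {}"
    "\<And>T. (\<And>n. T \<inter> W n \<noteq> {}) \<Longrightarrow> X \<subseteq> closure T"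
    using compact_dense_test_family[OF assms(1)] by blast
  have "\<forall>n. \<exists>C. C \<subseteq> S \<inter> W n \<and> cantor_set C \<and> syndetically_scrambled f (3 * \<epsilon>) C"
    using assms(9)[OF W(1) W(2)] by blast
  from choice[OF this] obtain Cs where Cs: "\<And>n. Cs n \<subseteq> S \<inter> W n" "\<And>n. cantor_set (Cs n)"
    "\<And>n. syndetically_scrambled f (3 * \<epsilon>) (Cs n)"
    by blast
  have "Cs n \<subseteq> X" for n
    using Cs(1) assms(5) by blast
  interpret scrambled_family X f \<epsilon> "3 * \<epsilon>" Cs
    using assms(2-4) \<open>\<And>n. Cs n \<subseteq> X\<close> Cs(2,3) by unfold_locales auto
  define T where "T = (\<Union>n. core n)"
  have "T \<subseteq> S"
    using core_subset Cs(1) unfolding T_def by blast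
  moreover have "X \<subseteq> closure T"
  proof (rule W(3))
    show "T \<inter> W n \<noteq> {}" for n
      using core_cantor[of n] core_subset[of n] Cs(1)[of n] unfolding T_def cantor_set_def by blast
  qed
  moreover have "syndetically_scrambled f \<epsilon> T"
  proof -
    have "(\<Union>n. Cs n) \<times> (\<Union>n. Cs n) \<subseteq> SProx f"
      using assms(8) Cs(1) by blast
    then show ?thesis
      unfolding T_def by (rule scrambled_cores[OF assms(4)])
  qed
  ultimately show ?thesis
    using mycielski_cores unfolding T_def by blast
qed

end
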